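(* For $r\ge1$, let $\mathbf{v}_r\in\mathrm{GF}(q^m)^r$ have rank $r\le m$, and let $\mathcal{L}_r=\langle\mathbf{v}_r\rangle^\perp$. Then the number $A_{r,r}$ of vectors in $\mathcal{L}_r$ of rank $r$ depends only on $r$ (not on the choice of $\mathbf{v}_r$) and satisfies $A_{r,r}=\alpha(m,r-1)-q^{r-1}A_{r-1,r-1}$, where $A_{0,0}=1$. Furthermore, the rank weight enumerator of $\mathcal{L}_r$ is $$W^{\mathrm{R}}_{\mathcal{L}_r}(x,y)=q^{-m}\Big\{\big[x+(q^m-1)y\big]^{[r]}+(q^m-1)(x-y)^{[r]}\Big\}.$$
   Context: $q$ is a prime power. For $\mathbf{x}\in\mathrm{GF}(q^m)^r$, $\mathrm{rk}(\mathbf{x})$ is the dimension over $\mathrm{GF}(q)$ of the $\mathrm{GF}(q)$-span of its coordinates in $\mathrm{GF}(q^m)$. $\langle\mathbf{v}\rangle=\{a\mathbf{v}:a\in\mathrm{GF}(q^m)\}$, $S^\perp=\{\mathbf{u}:\sum_iu_is_i=0\ \forall\mathbf{s}\in S\}$. $\alpha(m,0)=1$, $\alpha(m,u)=\prod_{i=0}^{u-1}(q^m-q^i)$. The rank weight enumerator of $\mathcal{C}\subseteq\mathrm{GF}(q^m)^r$ is $\sum_{\mathbf{c}\in\mathcal{C}}y^{\mathrm{rk}(\mathbf{c})}x^{r-\mathrm{rk}(\mathbf{c})}$. $q$-product: for homogeneous polynomials $a(x,y;m)=\sum_{i=0}^{d}a_i(m)y^ix^{d-i}$ and $b(x,y;m)=\sum_{j=0}^{e}b_j(m)y^jx^{e-j}$,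 with coefficients real functions of $m$ (zero outside the given ranges), $a*b=\sum_{u=0}^{d+e}c_u(m)y^ux^{d+e-u}$ with $c_u(m)=\sum_{i=0}^uq^{ie}a_i(m)b_{u-i}(m-i)$. $q$-powers: $a^{[0]}=1$, $a^{[l]}=a^{[l-1]}*a$. Here $x+(q^m-1)y$ has coefficients $1,q^m-1$ and $x-y$ has coefficients $1,-1$. *)

theory Defs
  imports "HOL-Algebra.Embedded_Algebras" "HOL-Algebra.FiniteProduct"
begin

text \<open>Vectors in GF(q^m)^r are lists of length r over the carrier of a finite field R;
  GF(q) is a subfield K of R with card K = q.\<close>

definition vecs :: "'a ring \<Rightarrow> nat \<Rightarrow> 'a list set" where
  "vecs R r = {u. length u = r \<and> set u \<subseteq> carrier R}"

definition rk :: "'a ring \<Rightarrow> 'a set \<Rightarrow> 'a list \<Rightarrow> nat" where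
  "rk R K x = (THE n. ring.dimension R n K (ring.Span R K x))"

definition dotp :: "'a ring \<Rightarrow> 'a list \<Rightarrow> 'a list \<Rightarrow> 'a" where
  "dotp R u s = (\<Oplus>\<^bsub>R\<^esub>i\<in>{..<length u}. u ! i \<otimes>\<^bsub>R\<^esub> s ! i)"

definition lineSpan :: "'a ring \<Rightarrow> 'a list \<Rightarrow> 'a list set" where
  "lineSpan R v = {map (\<lambda>x. a \<otimes>\<^bsub>R\<^esub> x) v | a. a \<in> carrier R}"

definition perp :: "'a ring \<Rightarrow> nat \<Rightarrow> 'a list set \<Rightarrow> 'a list set" where
  "perp R r S = {u \<in> vecs R r. \<forall>s\<in>S. dotp R u s = \<zero>\<^bsub>R\<^esub>}"

definition rwe :: "'a ring \<Rightarrow> 'a set \<Rightarrow> nat \<Rightarrow> 'a list set \<Rightarrow> real \<Rightarrow> real \<Rightarrow> real" where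
  "rwe R K r C x y = (\<Sum>c\<in>C. y ^ rk R K c * x ^ (r - rk R K c))"

definition alpha :: "nat \<Rightarrow> nat \<Rightarrow> nat \<Rightarrow> real" where
  "alpha q m u = (\<Prod>i<u. (real q ^ m - real q ^ i))"

fun Aseq :: "nat \<Rightarrow> nat \<Rightarrow> nat \<Rightarrow> real" where
  "Aseq q m 0 = 1"
| "Aseq q m (Suc r) = alpha q m r - real q ^ r * Aseq q m r"

text \<open>Homogeneous polynomial: (degree d, coefficient a u m of y^u x^(d-u)),
  coefficients are real functions of the (integer) parameter m, zero for u > d.\<close>
type_synonym hpoly = "nat \<times> (nat \<Rightarrow> int \<Rightarrow> real)"

fun qprod :: "nat \<Rightarrow> hpoly \<Rightarrow> hpoly \<Rightarrow> hpoly" where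
  "qprod q (d, a) (e, b) =
     (d + e, \<lambda>u m. if u \<le> d + e
                   then (\<Sum>i=0..u. real q ^ (i * e) * a i m * b (u - i) (m - int i))
                   else 0)"

fun qpow :: "nat \<Rightarrow> hpoly \<Rightarrow> nat \<Rightarrow> hpoly" where
  "qpow q a 0 = (0, \<lambda>u m. if u = 0 then 1 else 0)"
| "qpow q a (Suc l) = qprod q (qpow q a l) a"

text \<open>x + (q^m - 1) y\<close>
definition lin1 :: "nat \<Rightarrow> hpoly" where
  "lin1 q = (1, \<lambda>u m. if u = 0 then 1 else if u = 1 then real q powi m - 1 else 0)"

text \<open>x - y\<close>
definition lin2 :: hpoly where
  "lin2 = (1, \<lambda>u m. if u = 0 then 1 else if u = 1 then -1 else 0)"

fun heval :: "hpoly \<Rightarrow> int \<Rightarrow> real \<Rightarrow> real \<Rightarrow> real" where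
  "heval (d, a) m x y = (\<Sum>u\<le>d. a u m * y ^ u * x ^ (d - u))"

end

theory Submission
  imports Defs
begin

text \<open>
  Write v = v0 # v' with v0 \<noteq> 0 and length v' = n. A vector x # u is orthogonal to v iff
  x = f u := -(u \<cdot> v') / v0, and rk (f u # u) is rk u or rk u + 1 according as f u does or does
  not lie in the GF(q)-span of u. The vectors u of rank j with f u in their span are counted by
  double counting the pairs (c, u) with c \<in> GF(q)^n and c \<cdot> u = f u: for fixed u there are
  q^(n-j) such c, and for fixed c the condition says that u is orthogonal to c v0 + v', which
  again has full rank, so induction on the length applies. Together with the number of vectors
  of each rank, which are the coefficients of [x+(q^m-1)y]^[n], this yields the recursion of the
  coefficients of the claimed enumerator, whose top coefficient obeys the recursion of A_{r,r}.
\<close>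

lemma card_lists_Suc:
  assumes "finite A"
  shows "card {xs. set xs \<subseteq> A \<and> length xs = Suc n \<and> P xs}
       = (\<Sum>x\<in>A. card {xs. set xs \<subseteq> A \<and> length xs = n \<and> P (x # xs)})"
proof -
  let ?T = "\<lambda>x. {xs. set xs \<subseteq> A \<and> length xs = n \<and> P (x # xs)}"
  have "{xs. set xs \<subseteq> A \<and> length xs = Suc n \<and> P xs} = (\<Union>x\<in>A. (#) x ` ?T x)"
    by (auto simp: length_Suc_conv)
  moreover have "finite (?T x)" for x
    using finite_lists_length_eq[OF assms, of n] by (rule rev_finite_subset) auto
  ultimately have "card {xs. set xs \<subseteq> A \<and> length xs = Suc n \<and> P xs} = (\<Sum>x\<in>A. card ((#) x ` ?T x))"
    using assms by (auto intro: card_UN_disjoint)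
  then show ?thesis
    by (simp add: card_image)
qed

lemma (in abelian_monoid) finsum_lessThan_Suc_shift:
  assumes "f \<in> {..<Suc n} \<rightarrow> carrier G"
  shows "finsum G f {..<Suc n} = f 0 \<oplus> finsum G (\<lambda>i. f (Suc i)) {..<n}"
proof -
  have "{..<Suc n} = insert 0 (Suc ` {..<n})"
    by (auto simp: image_iff less_Suc_eq_0_disj)
  then have "finsum G f {..<Suc n} = f 0 \<oplus> finsum G f (Suc ` {..<n})"
    using assms by (simp add: Pi_iff)
  also have "finsum G f (Suc ` {..<n}) = finsum G (\<lambda>i. f (Suc i)) {..<n}"
    using assms by (intro finsum_reindex) auto
  finally show ?thesis .
qed

section \<open>q-products with a linear form\<close>

lemma fst_qprod [simp]: "fst (qprod q a b) = fst a + fst b"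
  by (cases a; cases b) simp

lemma snd_qprod:
  "snd (qprod q a b) u M =
     (if u \<le> fst a + fst b
      then (\<Sum>i=0..u. real q ^ (i * fst b) * snd a i M * snd b (u - i) (M - int i)) else 0)"
  by (cases a; cases b) simp

lemma fst_qpow [simp]: "fst (qpow q a n) = n * fst a"
  by (induction n) auto

lemma snd_qpow_eq_0: "n * fst a < u \<Longrightarrow> snd (qpow q a n) u M = 0"
  by (cases n) (auto simp: snd_qprod)

lemma snd_qpow_Suc_linear:
  assumes deg: "fst a = 1" and high: "\<And>j M. 1 < j \<Longrightarrow> snd a j M = 0"
  shows "snd (qpow q a (Suc n)) u M =
           real q ^ u * snd (qpow q a n) u M * snd a 0 (M - int u)
         + (if u = 0 then 0
            else real q ^ (u - 1) * snd (qpow q a n) (u - 1) M * snd a 1 (M - int (u - 1)))"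
proof (cases "u \<le> Suc n")
  case True
  define g where "g i = real q ^ i * snd (qpow q a n) i M * snd a (u - i) (M - int i)" for i
  have "snd (qpow q a (Suc n)) u M = (\<Sum>i=0..u. g i)"
    using True deg by (simp add: snd_qprod g_def)
  also have "\<dots> = g u + (if u = 0 then 0 else g (u - 1))"
  proof (cases u)
    case (Suc w)
    have "{0..Suc w} = insert (Suc w) (insert w {0..<w})" by auto
    moreover have "(\<Sum>i\<in>{0..<w}. g i) = 0"
      using Suc by (intro sum.neutral) (simp add: g_def high)
    ultimately show ?thesis using Suc by simp
  qed simp
  finally show ?thesis by (simp add: g_def)
next
  case False
  then show ?thesis using deg by (simp add: snd_qprod snd_qpow_eq_0)
qed

definition lin1_pow_coeff :: "nat \<Rightarrow> nat \<Rightarrow> nat \<Rightarrow> nat \<Rightarrow> real" where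
  "lin1_pow_coeff q m n k = snd (qpow q (lin1 q) n) k (int m)"

definition lin2_pow_coeff :: "nat \<Rightarrow> nat \<Rightarrow> nat \<Rightarrow> nat \<Rightarrow> real" where
  "lin2_pow_coeff q m n k = snd (qpow q lin2 n) k (int m)"

lemma lin1_pow_coeff_0: "lin1_pow_coeff q m 0 k = (if k = 0 then 1 else 0)"
  by (simp add: lin1_pow_coeff_def)

lemma lin2_pow_coeff_0: "lin2_pow_coeff q m 0 k = (if k = 0 then 1 else 0)"
  by (simp add: lin2_pow_coeff_def)

lemma lin1_pow_coeff_eq_0: "n < k \<Longrightarrow> lin1_pow_coeff q m n k = 0"
  by (simp add: lin1_pow_coeff_def lin1_def snd_qpow_eq_0)

lemma lin2_pow_coeff_eq_0: "n < k \<Longrightarrow> lin2_pow_coeff q m n k = 0"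
  by (simp add: lin2_pow_coeff_def lin2_def snd_qpow_eq_0)

lemma lin1_pow_coeff_Suc:
  assumes "0 < q"
  shows "lin1_pow_coeff q m (Suc n) k = real q ^ k * lin1_pow_coeff q m n k
     + (if k = 0 then 0 else (real q ^ m - real q ^ (k - 1)) * lin1_pow_coeff q m n (k - 1))"
proof -
  have "real q ^ (k - 1) * (real q powi (int m - int (k - 1)) - 1) = real q ^ m - real q ^ (k - 1)"
    using assms by (simp add: power_int_diff right_diff_distrib)
  then show ?thesis
    unfolding lin1_pow_coeff_def
    by (subst snd_qpow_Suc_linear) (auto simp: lin1_def algebra_simps)
qed

lemma lin2_pow_coeff_Suc:
  "lin2_pow_coeff q m (Suc n) k = real q ^ k * lin2_pow_coeff q m n k
     - (if k = 0 then 0 else real q ^ (k - 1) * lin2_pow_coeff q m n (k - 1))"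
  unfolding lin2_pow_coeff_def by (subst snd_qpow_Suc_linear) (auto simp: lin2_def)

lemma lin1_pow_coeff_diag: "0 < q \<Longrightarrow> lin1_pow_coeff q m n n = alpha q m n"
  by (induction n) (simp_all add: lin1_pow_coeff_0 lin1_pow_coeff_Suc lin1_pow_coeff_eq_0 alpha_def)

definition enum_coeff :: "nat \<Rightarrow> nat \<Rightarrow> nat \<Rightarrow> nat \<Rightarrow> real" where
  "enum_coeff q m n k =
     (lin1_pow_coeff q m n k + (real q ^ m - 1) * lin2_pow_coeff q m n k) / real q ^ m"

lemma enum_coeff_0: "0 < q \<Longrightarrow> enum_coeff q m 0 k = (if k = 0 then 1 else 0)"
  by (simp add: enum_coeff_def lin1_pow_coeff_0 lin2_pow_coeff_0)

lemma enum_coeff_eq_0: "n < k \<Longrightarrow> enum_coeff q m n k = 0"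
  by (simp add: enum_coeff_def lin1_pow_coeff_eq_0 lin2_pow_coeff_eq_0)

lemma enum_coeff_Suc:
  assumes "0 < q"
  shows "enum_coeff q m (Suc n) k = real q ^ k * enum_coeff q m n k
     + (if k = 0 then 0
        else lin1_pow_coeff q m n (k - 1) - real q ^ (k - 1) * enum_coeff q m n (k - 1))"
  using assms by (simp add: enum_coeff_def lin1_pow_coeff_Suc lin2_pow_coeff_Suc field_simps)

lemma enum_coeff_diag: "0 < q \<Longrightarrow> enum_coeff q m n n = Aseq q m n"
  by (induction n)
    (simp_all add: enum_coeff_0 enum_coeff_Suc enum_coeff_eq_0 lin1_pow_coeff_diag)

lemma heval_qpow_linear:
  assumes "fst a = 1"
  shows "heval (qpow q a n) M x y = (\<Sum>u\<le>n. snd (qpow q a n) u M * y ^ u * x ^ (n - u))"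
proof -
  have "qpow q a n = (n, snd (qpow q a n))"
    using assms by (simp add: prod_eq_iff)
  then show ?thesis by (metis heval.simps)
qed

lemma sum_enum_coeff_eq_heval:
  assumes "0 < q"
  shows "(\<Sum>k\<le>n. enum_coeff q m n k * (y ^ k * x ^ (n - k))) =
         real q powi (- int m) *
           (heval (qpow q (lin1 q) n) (int m) x y
            + (real q ^ m - 1) * heval (qpow q lin2 n) (int m) x y)"
proof -
  have "fst (lin1 q) = 1" "fst lin2 = 1"
    by (simp_all add: lin1_def lin2_def)
  from this[THEN heval_qpow_linear]
  have "heval (qpow q (lin1 q) n) (int m) x y
          = (\<Sum>k\<le>n. lin1_pow_coeff q m n k * (y ^ k * x ^ (n - k)))"
       "heval (qpow q lin2 n) (int m) x y
          = (\<Sum>k\<le>n. lin2_pow_coeff q m n k * (y ^ k * x ^ (n - k)))"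
    by (simp_all add: lin1_pow_coeff_def lin2_pow_coeff_def mult.assoc)
  moreover have "(\<Sum>k\<le>n. enum_coeff q m n k * (y ^ k * x ^ (n - k))) =
      ((\<Sum>k\<le>n. lin1_pow_coeff q m n k * (y ^ k * x ^ (n - k)))
       + (real q ^ m - 1) * (\<Sum>k\<le>n. lin2_pow_coeff q m n k * (y ^ k * x ^ (n - k)))) / real q ^ m"
    using assms
    by (simp add: enum_coeff_def sum_divide_distrib sum_distrib_left flip: sum.distrib)
      (auto intro!: sum.cong simp: field_simps)
  ultimately show ?thesis
    by (simp add: power_int_minus divide_inverse mult.commute)
qed

section \<open>Rank over a subfield\<close>

locale ext_field = field R for R :: "'a ring" (structure) +
  fixes K :: "'a set"
  assumes subfield_K: "subfield K R"
begin

declare Span.simps [simp del]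

lemma Span_Nil [simp]: "Span K [] = {\<zero>}"
  by (simp add: Span.simps)

lemma Span_Cons: "Span K (x # u) = line_extension K x (Span K u)"
  by (simp add: Span.simps)

lemma K_subset_carrier: "K \<subseteq> carrier R"
  using subfieldE(3)[OF subfield_K] .

lemmas K_closed = subringE[OF subfieldE(1)[OF subfield_K]]

lemma rk_eqI: "dimension n K (Span K u) \<Longrightarrow> rk R K u = n"
  unfolding rk_def using dimension_is_inj[OF subfield_K] by blast

lemma dimension_rk:
  assumes "set u \<subseteq> carrier R"
  shows "dimension (rk R K u) K (Span K u)"
proof -
  obtain b where "independent K b" "Span K b = Span K u"
    using filter_base[OF subfield_K assms] by blast
  then have "dimension (length b) K (Span K u)"
    using dimension_independent by metis
  then show ?thesis
    using rk_eqI by simp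
qed

lemma rk_Nil [simp]: "rk R K [] = 0"
  by (rule rk_eqI) simp

lemma Span_Cons_eq:
  assumes "x \<in> Span K u" "set u \<subseteq> carrier R"
  shows "Span K (x # u) = Span K u"
proof
  have "x \<in> carrier R"
    using assms Span_subgroup_props(1)[OF subfield_K] by blast
  then show "Span K u \<subseteq> Span K (x # u)"
    using mono_Span[OF subfield_K assms(2)] by blast
  show "Span K (x # u) \<subseteq> Span K u"
    using assms Span_base_incl[OF subfield_K assms(2)]
    by (intro mono_Span_subset[OF subfield_K]) auto
qed

lemma rk_Cons_in: "x \<in> Span K u \<Longrightarrow> set u \<subseteq> carrier R \<Longrightarrow> rk R K (x # u) = rk R K u"
  by (simp add: rk_def Span_Cons_eq)

lemma rk_Cons_notin:
  assumes "x \<in> carrier R" "x \<notin> Span K u" "set u \<subseteq> carrier R"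
  shows "rk R K (x # u) = Suc (rk R K u)"
  using Suc_dim[OF assms(1,2) dimension_rk[OF assms(3)]] by (simp add: rk_eqI Span_Cons)

lemma rk_Cons:
  "x \<in> carrier R \<Longrightarrow> set u \<subseteq> carrier R
    \<Longrightarrow> rk R K (x # u) = (if x \<in> Span K u then rk R K u else Suc (rk R K u))"
  by (simp add: rk_Cons_in rk_Cons_notin)

lemma rk_le_length: "set u \<subseteq> carrier R \<Longrightarrow> rk R K u \<le> length u"
proof (induction u)
  case (Cons x u)
  then show ?case
    by (cases "x \<in> Span K u") (simp_all add: rk_Cons_in rk_Cons_notin)
qed simp

lemma independent_if_rk_eq_length:
  "set u \<subseteq> carrier R \<Longrightarrow> rk R K u = length u \<Longrightarrow> independent K u"
proof (induction u)
  case (Cons x u)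
  then have "x \<notin> Span K u"
    using rk_Cons_in rk_le_length by fastforce
  with Cons show ?case
    by (simp add: rk_Cons_notin li_Cons)
qed simp

lemma combine_in_K: "set a \<subseteq> K \<Longrightarrow> set b \<subseteq> K \<Longrightarrow> combine a b \<in> K"
  by (induction a b rule: combine.induct) (simp_all add: K_closed)

lemma combine_map2_smult_add:
  assumes "length c = length v" "set ks \<subseteq> carrier R" "set c \<subseteq> carrier R" "set v \<subseteq> carrier R"
    and "v0 \<in> carrier R"
  shows "combine ks (map2 (\<lambda>a b. a \<otimes> v0 \<oplus> b) c v) = combine c ks \<otimes> v0 \<oplus> combine ks v"
  using assms(1-4)
proof (induction ks arbitrary: c v)
  case (Cons k ks)
  show ?case
  proof (cases c)
    case (Cons a c')
    with Cons.prems obtain b v' where "v = b # v'" by (cases v) auto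
    have carrier: "k \<in> carrier R" "a \<in> carrier R" "b \<in> carrier R"
      "combine c' ks \<in> carrier R" "combine ks v' \<in> carrier R"
      using Cons.prems \<open>c = a # c'\<close> \<open>v = b # v'\<close> by auto
    have "combine (k # ks) (map2 (\<lambda>a b. a \<otimes> v0 \<oplus> b) c v)
        = k \<otimes> (a \<otimes> v0 \<oplus> b) \<oplus> (combine c' ks \<otimes> v0 \<oplus> combine ks v')"
      using Cons.prems Cons.IH[of c' v'] \<open>c = a # c'\<close> \<open>v = b # v'\<close> by simp
    also have "\<dots> = (a \<otimes> k \<oplus> combine c' ks) \<otimes> v0 \<oplus> (k \<otimes> b \<oplus> combine ks v')"
      using carrier assms(5) by algebra
    finally show ?thesis
      using \<open>c = a # c'\<close> \<open>v = b # v'\<close> by simp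
  qed (use Cons.prems assms(5) in simp)
qed (simp add: assms(5))

lemma independent_map2_smult_add:
  assumes indep: "independent K (v0 # v)" and c: "set c \<subseteq> K" "length c = length v"
  shows "independent K (map2 (\<lambda>a b. a \<otimes> v0 \<oplus> b) c v)"
proof (rule trivial_combine_imp_independent[OF subfield_K])
  have v0: "v0 \<in> carrier R" and v: "set v \<subseteq> carrier R"
    using independent_in_carrier[OF indep] by auto
  moreover have "set c \<subseteq> carrier R"
    using c K_subset_carrier by blast
  ultimately show "set (map2 (\<lambda>a b. a \<otimes> v0 \<oplus> b) c v) \<subseteq> carrier R"
    by (auto elim!: in_set_zipE)
  fix ks assume ks: "set ks \<subseteq> K" and "combine ks (map2 (\<lambda>a b. a \<otimes> v0 \<oplus> b) c v) = \<zero>"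
  then have "combine (combine c ks # ks) (v0 # v) = \<zero>"
    using combine_map2_smult_add[of c v ks v0] v0 v c K_subset_carrier by auto
  moreover have "set (combine c ks # ks) \<subseteq> K"
    using combine_in_K[OF c(1) ks] ks by simp
  ultimately have "set (take (Suc (length v)) (combine c ks # ks)) \<subseteq> {\<zero>}"
    using independent_imp_trivial_combine[OF subfield_K indep] by fastforce
  then show "set (take (length (map2 (\<lambda>a b. a \<otimes> v0 \<oplus> b) c v)) ks) \<subseteq> {\<zero>}"
    using c by simp
qed

lemma mult_add_eq_zero_iff:
  assumes "x \<in> carrier R" "t \<in> carrier R" "v0 \<in> carrier R" "v0 \<noteq> \<zero>"
  shows "x \<otimes> v0 \<oplus> t = \<zero> \<longleftrightarrow> x = \<ominus> t \<otimes> inv v0"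
proof -
  have v0: "v0 \<in> Units R"
    using assms(3,4) field_Units by blast
  have "x \<otimes> v0 \<oplus> t = \<zero> \<longleftrightarrow> x \<otimes> v0 = \<ominus> t"
    using assms(1-3) by (metis minus_equality l_neg m_closed)
  also have "\<dots> \<longleftrightarrow> x = \<ominus> t \<otimes> inv v0"
    using v0 assms(1,2)
    by (metis Units_inv_closed Units_r_inv Units_closed a_inv_closed m_assoc r_one Units_l_inv)
  finally show ?thesis .
qed

lemma dotp_eq_combine:
  "length u = length s \<Longrightarrow> set u \<subseteq> carrier R \<Longrightarrow> set s \<subseteq> carrier R \<Longrightarrow> dotp R u s = combine u s"
proof (induction u arbitrary: s)
  case (Cons x u)
  then obtain y s' where s: "s = y # s'"
    by (cases s) auto
  have "(\<lambda>i. (x # u) ! i \<otimes> s ! i) \<in> {..<Suc (length u)} \<rightarrow> carrier R"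
    using Cons.prems by (intro Pi_I m_closed) (metis nth_mem subsetD length_Cons lessThan_iff)+
  then have "dotp R (x # u) s = x \<otimes> y \<oplus> dotp R u s'"
    using s by (simp add: dotp_def finsum_lessThan_Suc_shift)
  with Cons s show ?case
    by simp
qed (simp add: dotp_def)

lemma perp_lineSpan_eq:
  assumes "v \<in> vecs R r"
  shows "perp R r (lineSpan R v) = {u \<in> vecs R r. combine u v = \<zero>}"
proof -
  have v: "set v \<subseteq> carrier R" "length v = r"
    using assms by (auto simp: vecs_def)
  have "(\<forall>s\<in>lineSpan R v. dotp R u s = \<zero>) \<longleftrightarrow> combine u v = \<zero>" if "u \<in> vecs R r" for u
  proof -
    have u: "set u \<subseteq> carrier R" "length u = r"
      using that by (auto simp: vecs_def)
    have "dotp R u (map (\<lambda>x. a \<otimes> x) v) = a \<otimes> combine u v" if a: "a \<in> carrier R" for a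
    proof -
      have "map (\<lambda>x. a \<otimes> x) v = map (\<lambda>x. x \<otimes> a) v"
        using v(1) a by (intro map_cong) (auto intro: m_comm)
      then have "dotp R u (map (\<lambda>x. a \<otimes> x) v) = dotp R u (map (\<lambda>x. x \<otimes> a) v)"
        by (simp only:)
      also have "\<dots> = combine u (map (\<lambda>x. x \<otimes> a) v)"
        using u v a by (intro dotp_eq_combine) auto
      also have "\<dots> = a \<otimes> combine u v"
        using u v a by (simp add: combine_l_distr[symmetric] m_comm)
      finally show ?thesis .
    qed
    moreover have "combine u v \<in> carrier R"
      using u v by simp
    ultimately show ?thesis
      unfolding lineSpan_def by (auto, metis one_closed l_one)
  qed
  then show ?thesis
    unfolding perp_def by blast
qed

lemma card_kernel_Cons:
  assumes v0: "v0 \<in> carrier R" "v0 \<noteq> \<zero>" and v: "set v \<subseteq> carrier R"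
  shows "card {u \<in> vecs R (Suc n). combine u (v0 # v) = \<zero> \<and> P u}
       = card {u \<in> vecs R n. P ((\<ominus> combine u v \<otimes> inv v0) # u)}"
proof -
  let ?f = "\<lambda>u. \<ominus> combine u v \<otimes> inv v0"
  have inv_v0: "inv v0 \<in> carrier R"
    using v0 field_Units by blast
  have f_carrier: "?f u \<in> carrier R" if "u \<in> vecs R n" for u
    using that v inv_v0 by (simp add: vecs_def)
  have solve: "combine (x # u) (v0 # v) = \<zero> \<longleftrightarrow> x = ?f u"
    if "x \<in> carrier R" "u \<in> vecs R n" for x u
    using that v v0 by (simp add: vecs_def mult_add_eq_zero_iff)
  have "{u \<in> vecs R (Suc n). combine u (v0 # v) = \<zero> \<and> P u}
      = (\<lambda>u. ?f u # u) ` {u \<in> vecs R n. P (?f u # u)}"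
  proof (intro equalityI subsetI)
    fix u assume "u \<in> {u \<in> vecs R (Suc n). combine u (v0 # v) = \<zero> \<and> P u}"
    then obtain x u' where "u = x # u'" "x \<in> carrier R" "u' \<in> vecs R n"
      "combine (x # u') (v0 # v) = \<zero>" "P (x # u')"
      by (auto simp: vecs_def length_Suc_conv)
    with solve show "u \<in> (\<lambda>u. ?f u # u) ` {u \<in> vecs R n. P (?f u # u)}"
      by auto
  next
    fix u assume "u \<in> (\<lambda>u. ?f u # u) ` {u \<in> vecs R n. P (?f u # u)}"
    with solve f_carrier show "u \<in> {u \<in> vecs R (Suc n). combine u (v0 # v) = \<zero> \<and> P u}"
      by (auto simp: vecs_def)
  qed
  moreover have "inj (\<lambda>u. ?f u # u)"
    by (rule injI) simp
  ultimately show ?thesis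
    by (simp add: card_image inj_on_subset)
qed

lemma smult_in_Span_iff:
  assumes "set u \<subseteq> carrier R" "x \<in> carrier R" "x \<notin> Span K u" "a \<in> K"
  shows "a \<otimes> x \<in> Span K u \<longleftrightarrow> a = \<zero>"
proof
  assume "a \<otimes> x \<in> Span K u"
  with assms show "a = \<zero>"
    using Span_m_inv_simprule[OF subfield_K assms(1), of a x] by blast
next
  assume "a = \<zero>"
  with assms show "a \<otimes> x \<in> Span K u"
    using Span_subgroup_props(2)[OF subfield_K assms(1)] by simp
qed

lemma card_diff_smult_in_Span:
  assumes u: "set u \<subseteq> carrier R" and x: "x \<in> carrier R" and w: "w \<in> carrier R"
  shows "card {k \<in> K. w \<ominus> k \<otimes> x \<in> Span K u}
       = (if w \<in> Span K (x # u) then if x \<in> Span K u then card K else 1 else 0)"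
proof (cases "w \<in> Span K (x # u)")
  case False
  have "w \<ominus> k \<otimes> x \<notin> Span K u" if "k \<in> K" for k
  proof
    assume "w \<ominus> k \<otimes> x \<in> Span K u"
    moreover have "w = k \<otimes> x \<oplus> (w \<ominus> k \<otimes> x)"
      using that K_subset_carrier x w by (simp add: subset_iff) algebra
    ultimately have "w \<in> Span K (x # u)"
      unfolding Span_Cons line_extension_mem_iff using that by blast
    with False show False ..
  qed
  then have "{k \<in> K. w \<ominus> k \<otimes> x \<in> Span K u} = {}"
    by blast
  with False show ?thesis
    by (simp only: card.empty if_False)
next
  case True
  then obtain k0 s where k0: "k0 \<in> K" and s: "s \<in> Span K u" and ws: "w = k0 \<otimes> x \<oplus> s"
    unfolding Span_Cons line_extension_mem_iff by blast
  have k0_minus: "k0 \<ominus> k \<in> K" if "k \<in> K" for k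
    using k0 that by (simp add: minus_eq K_closed)
  have shift: "w \<ominus> k \<otimes> x \<in> Span K u \<longleftrightarrow> (k0 \<ominus> k) \<otimes> x \<in> Span K u" if k: "k \<in> K" for k
  proof -
    have "k \<in> carrier R" "k0 \<in> carrier R" "s \<in> carrier R"
      using k k0 s K_subset_carrier Span_subgroup_props(1)[OF subfield_K u] by blast+
    then have "w \<ominus> k \<otimes> x = (k0 \<ominus> k) \<otimes> x \<oplus> s" "(k0 \<ominus> k) \<otimes> x = (w \<ominus> k \<otimes> x) \<oplus> \<ominus> s"
      unfolding ws using x by algebra+
    with s show ?thesis
      by (metis Span_subgroup_props(3,4)[OF subfield_K u])
  qed
  show ?thesis
  proof (cases "x \<in> Span K u")
    case True
    then have "{k \<in> K. w \<ominus> k \<otimes> x \<in> Span K u} = K"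
      using shift k0_minus Span_smult_closed[OF subfield_K u] by blast
    with \<open>w \<in> Span K (x # u)\<close> True show ?thesis
      by (simp only: if_True)
  next
    case False
    have "k0 \<ominus> k = \<zero> \<longleftrightarrow> k = k0" if "k \<in> K" for k
      using that k0 K_subset_carrier by (metis subsetD r_right_minus_eq)
    then have "{k \<in> K. w \<ominus> k \<otimes> x \<in> Span K u} = {k0}"
      using shift k0 k0_minus smult_in_Span_iff[OF u x False] by auto
    with \<open>w \<in> Span K (x # u)\<close> False show ?thesis
      by simp
  qed
qed

lemma card_combine_fibre:
  assumes "finite K" "set u \<subseteq> carrier R" "w \<in> carrier R"
  shows "card {c. set c \<subseteq> K \<and> length c = length u \<and> combine c u = w}
       = (if w \<in> Span K u then card K ^ (length u - rk R K u) else 0)"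
  using assms(2,3)
proof (induction u arbitrary: w)
  case Nil
  have "{c. set c \<subseteq> K \<and> length c = 0 \<and> combine c [] = w} = (if w = \<zero> then {[]} else {})"
    by auto
  then show ?case
    by simp
next
  case (Cons x u)
  let ?e = "length u - rk R K u"
  have x: "x \<in> carrier R" and u: "set u \<subseteq> carrier R"
    using Cons.prems by auto
  have "combine (k # c) (x # u) = w \<longleftrightarrow> combine c u = w \<ominus> k \<otimes> x"
    if "k \<in> K" "set c \<subseteq> K" for k c
  proof -
    have "k \<in> carrier R" "combine c u \<in> carrier R"
      using that u K_subset_carrier by auto
    then show ?thesis
      using x Cons.prems(2) by (simp add: minus_eq add.inv_solve_right a_comm eq_commute)
  qed
  then have "card {c. set c \<subseteq> K \<and> length c = length (x # u) \<and> combine c (x # u) = w}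
      = (\<Sum>k\<in>K. card {c. set c \<subseteq> K \<and> length c = length u \<and> combine c u = w \<ominus> k \<otimes> x})"
    using card_lists_Suc[OF assms(1)] by (auto intro!: sum.cong arg_cong[where f = card])
  also have "\<dots> = (\<Sum>k\<in>K. if w \<ominus> k \<otimes> x \<in> Span K u then card K ^ ?e else 0)"
    using Cons.IH[OF u] x Cons.prems(2) K_subset_carrier by (intro sum.cong) auto
  also have "\<dots> = card K ^ ?e * card {k \<in> K. w \<ominus> k \<otimes> x \<in> Span K u}"
    using assms(1) by (simp add: sum.If_cases Int_def)
  also have "\<dots> = (if w \<in> Span K (x # u) then card K ^ (length (x # u) - rk R K (x # u)) else 0)"
    using rk_le_length[OF u]
    by (simp add: card_diff_smult_in_Span x u Cons.prems(2) rk_Cons Suc_diff_le)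
  finally show ?case .
qed

lemma card_K_pos: "finite K \<Longrightarrow> 0 < card K"
  using K_closed(4) by (simp add: card_gt_0_iff)

lemma card_Span:
  assumes "finite K" "set u \<subseteq> carrier R"
  shows "card (Span K u) = card K ^ rk R K u"
proof -
  let ?C = "{c. set c \<subseteq> K \<and> length c = length u}"
  have Span_eq: "Span K u = (\<lambda>c. combine c u) ` ?C"
    using Span_eq_combine_set_length_version[OF subfield_K assms(2)] by auto
  have fin: "finite ?C"
    using finite_lists_length_eq[OF assms(1)] by simp
  have "card K ^ length u = card ?C"
    using card_lists_length_eq[OF assms(1)] by simp
  also have "\<dots> = (\<Sum>w\<in>Span K u. card {c \<in> ?C. combine c u = w})"
    using sum.group[OF fin _ equalityD2[OF Span_eq], of "\<lambda>_. 1 :: nat"] fin Span_eq by simp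
  also have "\<dots> = card (Span K u) * card K ^ (length u - rk R K u)"
    using card_combine_fibre[OF assms] Span_subgroup_props(1)[OF subfield_K assms(2)]
    by (simp add: subset_iff)
  finally have "card K ^ rk R K u * card K ^ (length u - rk R K u)
      = card (Span K u) * card K ^ (length u - rk R K u)"
    using rk_le_length[OF assms(2)] by (simp flip: power_add)
  then show ?thesis
    using card_K_pos[OF assms(1)] by simp
qed

end

section \<open>Counting vectors of given rank over a finite field\<close>

locale finite_ext_field = ext_field +
  fixes m :: nat
  assumes finite_carrier: "finite (carrier R)"
    and card_carrier: "card (carrier R) = card K ^ m"
begin

lemma finite_K: "finite K"
  using finite_carrier K_subset_carrier by (rule finite_subset[rotated])

lemma finite_vecs: "finite (vecs R n)"
  using finite_lists_length_eq[OF finite_carrier, of n] by (simp add: vecs_def conj_commute)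

lemma card_vecs_Suc:
  "card {u \<in> vecs R (Suc n). P u} = (\<Sum>u\<in>vecs R n. card {x \<in> carrier R. P (x # u)})"
proof -
  have "card {u \<in> vecs R (Suc n). P u} = (\<Sum>x\<in>carrier R. card {u \<in> vecs R n. P (x # u)})"
    using card_lists_Suc[OF finite_carrier, of n P]
    by (simp add: vecs_def conj_commute conj_left_commute)
  also have "\<dots> = (\<Sum>u\<in>vecs R n. card {x \<in> carrier R. P (x # u)})"
    by (rule sum_multicount_gen[OF finite_carrier finite_vecs]) simp
  finally show ?thesis .
qed

lemma card_rank_Cons:
  assumes u: "set u \<subseteq> carrier R"
  shows "real (card {x \<in> carrier R. rk R K (x # u) = k})
       = (if rk R K u = k then real (card K) ^ k else 0)
         + (if Suc (rk R K u) = k then real (card K) ^ m - real (card K) ^ (k - 1) else 0)"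
proof -
  have Span_sub: "Span K u \<subseteq> carrier R"
    using Span_subgroup_props(1)[OF subfield_K u] .
  let ?A = "{x \<in> Span K u. rk R K u = k}" and ?B = "{x \<in> carrier R - Span K u. Suc (rk R K u) = k}"
  have "{x \<in> carrier R. rk R K (x # u) = k} = ?A \<union> ?B"
    using Span_sub u by (auto simp: rk_Cons)
  moreover have "card (?A \<union> ?B) = card ?A + card ?B"
    using finite_carrier Span_sub by (intro card_Un_disjoint) (auto intro: rev_finite_subset)
  ultimately have "card {x \<in> carrier R. rk R K (x # u) = k} = card ?A + card ?B"
    by simp
  moreover have "real (card (carrier R - Span K u)) = real (card K) ^ m - real (card K) ^ rk R K u"
    using card_Diff_subset[OF finite_subset[OF Span_sub finite_carrier] Span_sub]
      card_mono[OF finite_carrier Span_sub]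
    by (simp add: card_carrier card_Span[OF finite_K u] of_nat_diff)
  ultimately show ?thesis
    by (auto simp: card_Span[OF finite_K u] set_diff_eq)
qed

lemma card_vecs_rank:
  "real (card {u \<in> vecs R n. rk R K u = k}) = lin1_pow_coeff (card K) m n k"
proof (induction n arbitrary: k)
  case 0
  have "{u \<in> vecs R 0. rk R K u = k} = (if k = 0 then {[]} else {})"
    by (auto simp: vecs_def)
  then show ?case
    by (simp add: lin1_pow_coeff_0)
next
  case (Suc n)
  let ?q = "real (card K)"
  have "real (card {u \<in> vecs R (Suc n). rk R K u = k})
      = (\<Sum>u\<in>vecs R n. (if rk R K u = k then ?q ^ k else 0)
          + (if Suc (rk R K u) = k then ?q ^ m - ?q ^ (k - 1) else 0))"
    unfolding card_vecs_Suc of_nat_sum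
    by (intro sum.cong refl) (simp add: card_rank_Cons vecs_def)
  also have "\<dots> = ?q ^ k * card {u \<in> vecs R n. rk R K u = k}
      + (if k = 0 then 0 else (?q ^ m - ?q ^ (k - 1)) * card {u \<in> vecs R n. rk R K u = k - 1})"
    using finite_vecs by (cases k) (simp_all add: sum.distrib sum.If_cases Int_def)
  also have "\<dots> = lin1_pow_coeff (card K) m (Suc n) k"
    using card_K_pos[OF finite_K] by (simp add: Suc.IH lin1_pow_coeff_Suc)
  finally show ?case .
qed

lemma card_rank_Cons_split:
  assumes "\<And>u. u \<in> vecs R n \<Longrightarrow> g u \<in> carrier R"
  shows "real (card {u \<in> vecs R n. rk R K (g u # u) = k})
       = real (card {u \<in> vecs R n. g u \<in> Span K u \<and> rk R K u = k})
         + real (card {u \<in> vecs R n. Suc (rk R K u) = k})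
         - real (card {u \<in> vecs R n. g u \<in> Span K u \<and> Suc (rk R K u) = k})"
proof -
  let ?N = "{u \<in> vecs R n. g u \<notin> Span K u \<and> Suc (rk R K u) = k}"
  have "{u \<in> vecs R n. rk R K (g u # u) = k}
      = {u \<in> vecs R n. g u \<in> Span K u \<and> rk R K u = k} \<union> ?N"
    using assms by (auto simp: rk_Cons vecs_def split: if_split_asm)
  moreover have "{u \<in> vecs R n. Suc (rk R K u) = k}
      = {u \<in> vecs R n. g u \<in> Span K u \<and> Suc (rk R K u) = k} \<union> ?N"
    by auto
  ultimately show ?thesis
    using finite_vecs[of n] by (simp add: card_Un_disjoint disjoint_iff)
qed

lemma card_in_Span_double_count:
  assumes v0: "v0 \<in> carrier R" "v0 \<noteq> \<zero>" and v: "set v \<subseteq> carrier R" "length v = n"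
  shows "card K ^ (n - j) * card {u \<in> vecs R n. \<ominus> combine u v \<otimes> inv v0 \<in> Span K u \<and> rk R K u = j}
       = (\<Sum>c \<in> {c. set c \<subseteq> K \<and> length c = n}.
            card {u \<in> vecs R n. combine u (map2 (\<lambda>a b. a \<otimes> v0 \<oplus> b) c v) = \<zero> \<and> rk R K u = j})"
proof -
  let ?f = "\<lambda>u. \<ominus> combine u v \<otimes> inv v0"
  let ?C = "{c. set c \<subseteq> K \<and> length c = n}" and ?V = "{u \<in> vecs R n. rk R K u = j}"
  have inv_v0: "inv v0 \<in> carrier R"
    using v0 field_Units by blast
  have "combine u (map2 (\<lambda>a b. a \<otimes> v0 \<oplus> b) c v) = \<zero> \<longleftrightarrow> combine c u = ?f u"
    if "c \<in> ?C" "u \<in> vecs R n" for c u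
  proof -
    have "set c \<subseteq> carrier R"
      using that(1) K_subset_carrier by auto
    with that v v0 show ?thesis
      by (simp add: vecs_def combine_map2_smult_add mult_add_eq_zero_iff)
  qed
  then have "(\<Sum>c\<in>?C. card {u \<in> vecs R n.
                combine u (map2 (\<lambda>a b. a \<otimes> v0 \<oplus> b) c v) = \<zero> \<and> rk R K u = j})
      = (\<Sum>c\<in>?C. card {u \<in> ?V. combine c u = ?f u})"
    by (intro sum.cong refl arg_cong[where f = card]) auto
  also have "\<dots> = (\<Sum>u\<in>?V. card {c \<in> ?C. combine c u = ?f u})"
    using finite_lists_length_eq[OF finite_K] finite_vecs
    by (intro sum_multicount_gen) auto
  also have "\<dots> = (\<Sum>u\<in>?V. if ?f u \<in> Span K u then card K ^ (n - j) else 0)"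
  proof (intro sum.cong refl)
    fix u assume "u \<in> ?V"
    then have u: "set u \<subseteq> carrier R" "length u = n" "rk R K u = j"
      by (auto simp: vecs_def)
    moreover have "?f u \<in> carrier R"
      using u v inv_v0 by simp
    ultimately show "card {c \<in> ?C. combine c u = ?f u}
        = (if ?f u \<in> Span K u then card K ^ (n - j) else 0)"
      using card_combine_fibre[OF finite_K, of u "?f u"] by (simp add: conj_assoc)
  qed
  also have "\<dots> = card K ^ (n - j) * card {u \<in> vecs R n. ?f u \<in> Span K u \<and> rk R K u = j}"
    using finite_vecs by (simp add: sum.If_cases Int_def conj_commute)
  finally show ?thesis ..
qed

lemma card_in_Span_rank:
  assumes v0: "v0 \<in> carrier R" "v0 \<noteq> \<zero>" and v: "set v \<subseteq> carrier R" "length v = n"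
    and kernels: "\<And>c. set c \<subseteq> K \<Longrightarrow> length c = n \<Longrightarrow>
      real (card {u \<in> vecs R n. combine u (map2 (\<lambda>a b. a \<otimes> v0 \<oplus> b) c v) = \<zero> \<and> rk R K u = j})
        = enum_coeff (card K) m n j"
  shows "real (card {u \<in> vecs R n. \<ominus> combine u v \<otimes> inv v0 \<in> Span K u \<and> rk R K u = j})
       = real (card K) ^ j * enum_coeff (card K) m n j"
proof -
  let ?q = "real (card K)"
    and ?N = "real (card {u \<in> vecs R n. \<ominus> combine u v \<otimes> inv v0 \<in> Span K u \<and> rk R K u = j})"
  have "?q ^ (n - j) * ?N = (\<Sum>c \<in> {c. set c \<subseteq> K \<and> length c = n}. enum_coeff (card K) m n j)"
    using card_in_Span_double_count[OF v0 v, of j, THEN arg_cong[where f = real]] kernels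
    by simp
  also have "\<dots> = ?q ^ n * enum_coeff (card K) m n j"
    by (simp add: card_lists_length_eq[OF finite_K])
  finally have eq: "?q ^ (n - j) * ?N = ?q ^ n * enum_coeff (card K) m n j" .
  show ?thesis
  proof (cases "j \<le> n")
    case True
    then have "?q ^ n = ?q ^ (n - j) * ?q ^ j"
      by (simp flip: power_add)
    with eq card_K_pos[OF finite_K] show ?thesis
      by simp
  next
    case False
    with eq show ?thesis
      by (simp add: enum_coeff_eq_0)
  qed
qed

lemma card_kernel_rank:
  assumes "independent K v" "length v = n"
  shows "real (card {u \<in> vecs R n. combine u v = \<zero> \<and> rk R K u = k}) = enum_coeff (card K) m n k"
  using assms
proof (induction n arbitrary: v k)
  case 0
  have "{u \<in> vecs R 0. combine u v = \<zero> \<and> rk R K u = k} = (if k = 0 then {[]} else {})"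
    by (auto simp: vecs_def)
  then show ?case
    using card_K_pos[OF finite_K] by (simp add: enum_coeff_0)
next
  case (Suc n)
  let ?q = "real (card K)"
  obtain v0 v' where v: "v = v0 # v'"
    using Suc.prems(2) by (cases v) auto
  have indep: "independent K (v0 # v')" and len: "length v' = n"
    using Suc.prems v by auto
  have v0: "v0 \<in> carrier R" "v0 \<noteq> \<zero>" and v': "set v' \<subseteq> carrier R"
    using independent_in_carrier[OF indep] independent_backwards(1)[OF indep]
      Span_subgroup_props(2)[OF subfield_K] by auto
  define f where "f u = \<ominus> combine u v' \<otimes> inv v0" for u
  have f_carrier: "f u \<in> carrier R" if "u \<in> vecs R n" for u
    using that v' v0 field_Units by (auto simp: f_def vecs_def)
  have in_Span_count: "real (card {u \<in> vecs R n. f u \<in> Span K u \<and> rk R K u = j})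
      = ?q ^ j * enum_coeff (card K) m n j" for j
    unfolding f_def
    using card_in_Span_rank[OF v0 v' len] Suc.IH[OF independent_map2_smult_add[OF indep]] len
    by simp
  have "real (card {u \<in> vecs R (Suc n). combine u v = \<zero> \<and> rk R K u = k})
      = real (card {u \<in> vecs R n. rk R K (f u # u) = k})"
    unfolding v f_def by (simp add: card_kernel_Cons[OF v0 v'])
  also have "\<dots> = real (card {u \<in> vecs R n. f u \<in> Span K u \<and> rk R K u = k})
         + real (card {u \<in> vecs R n. Suc (rk R K u) = k})
         - real (card {u \<in> vecs R n. f u \<in> Span K u \<and> Suc (rk R K u) = k})"
    using f_carrier by (rule card_rank_Cons_split)
  also have "\<dots> = enum_coeff (card K) m (Suc n) k"
    using card_K_pos[OF finite_K]
    by (cases k) (simp_all add: in_Span_count card_vecs_rank enum_coeff_Suc)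
  finally show ?case .
qed

end

lemma rwe_eq_sum_rank_distribution:
  assumes "finite C" "\<And>c. c \<in> C \<Longrightarrow> rk R K c \<le> r"
  shows "rwe R K r C x y = (\<Sum>k\<le>r. real (card {c \<in> C. rk R K c = k}) * (y ^ k * x ^ (r - k)))"
  unfolding rwe_def
  using sum.group[OF assms(1) finite_atMost,
      where g = "rk R K" and h = "\<lambda>c. y ^ rk R K c * x ^ (r - rk R K c)"] assms(2)
  by (auto simp: image_subset_iff)

theorem lemma7:
  fixes R :: "'a ring" and K :: "'a set" and q m r :: nat and v :: "'a list"
  assumes "field R" and "finite (carrier R)" and "subfield K R"
    and "card K = q" and "card (carrier R) = q ^ m"
    and "1 \<le> r" and "r \<le> m"
    and "v \<in> vecs R r" and "rk R K v = r"
  shows "real (card {c \<in> perp R r (lineSpan R v). rk R K c = r}) = Aseq q m r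
     \<and> (\<forall>x y. rwe R K r (perp R r (lineSpan R v)) x y
          = real q powi (- int m) *
            (heval (qpow q (lin1 q) r) (int m) x y
             + (real q ^ m - 1) * heval (qpow q lin2 r) (int m) x y))"
proof -
  interpret ext_field R K
    using assms(1,3) by (simp add: ext_field_def ext_field_axioms_def)
  interpret finite_ext_field R K m
    using assms(2,4,5) by unfold_locales simp_all
  let ?C = "perp R r (lineSpan R v)"
  have v: "set v \<subseteq> carrier R" "length v = r"
    using assms(8) by (auto simp: vecs_def)
  have C: "?C = {u \<in> vecs R r. combine u v = \<zero>\<^bsub>R\<^esub>}"
    using perp_lineSpan_eq[OF assms(8)] .
  have dist: "real (card {c \<in> ?C. rk R K c = k}) = enum_coeff q m r k" for k
    using card_kernel_rank[OF independent_if_rk_eq_length[OF v(1)] v(2), of k] assms(4,9) v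
    by (simp add: C conj_assoc)
  have "finite ?C"
    using finite_vecs by (simp add: C)
  moreover have "rk R K c \<le> r" if "c \<in> ?C" for c
    using that rk_le_length by (auto simp: C vecs_def)
  ultimately have "rwe R K r ?C x y = (\<Sum>k\<le>r. enum_coeff q m r k * (y ^ k * x ^ (r - k)))" for x y
    by (simp add: rwe_eq_sum_rank_distribution dist)
  then show ?thesis
    using dist[of r] card_K_pos[OF finite_K] assms(4)
    by (simp add: enum_coeff_diag sum_enum_coeff_eq_heval)
qed

end
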